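(* Let $\lambda_k,\varphi_k$ ($k=1,\dots,n$) be nonnegative integrable random variables on a probability space, and put $\lambda_0=0$. (i) If $\lambda_k=\mathbb{E}\sqrt{\varphi_k^2+\lambda_{k-1}^2}$ for $k=1,\dots,n$, then \[\max\big(\|(\varphi_k)_{k=1}^n\|_{L^1(\ell^2)},\|(\varphi_k)_{k=1}^n\|_{\mathrm{ind}}\big)\le2\lambda_n.\] (ii) If $\mathbb{E}\lambda_k\ge\mathbb{E}\sqrt{\varphi_k^2+\lambda_{k-1}^2}$ for $k=1,\dots,n$ and the $\lambda_k$ are bounded, then \[\max\big(\|(\varphi_k)_{k=1}^n\|_{L^1(\ell^2)},\|(\varphi_k)_{k=1}^n\|_{\mathrm{ind}}\big)\le(1+2^{1/2})\sqrt{\mathbb{E}\lambda_n}\sqrt{\max_{1\le k\le n}\sup\lambda_k}.\]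
   Context: For random variables $g_1,\dots,g_n$ on a probability space $(\Omega,\mu)$: $\|(g_k)\|_{L^1(\ell^2)}=\mathbb{E}(\sum_k|g_k|^2)^{1/2}$ and $\|(g_k)\|_{\mathrm{ind}}=\int_{\Omega^n}(\sum_k|g_k(\omega_k)|^2)^{1/2}d\mu(\omega_1)\cdots d\mu(\omega_n)$. In (i) the $\lambda_k$ are constants (for $k\ge1$). *)

theory Defs
  imports "HOL-Probability.Probability"
begin

definition L1l2_norm :: "'a measure \<Rightarrow> nat \<Rightarrow> (nat \<Rightarrow> 'a \<Rightarrow> real) \<Rightarrow> real" where
  "L1l2_norm M n g = (\<integral>\<omega>. sqrt (\<Sum>k=1..n. (g k \<omega>)^2) \<partial>M)"

definition ind_norm :: "'a measure \<Rightarrow> nat \<Rightarrow> (nat \<Rightarrow> 'a \<Rightarrow> real) \<Rightarrow> real" where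
  "ind_norm M n g = (\<integral>\<omega>. sqrt (\<Sum>k=1..n. (g k (\<omega> k))^2) \<partial>(PiM {1..n} (\<lambda>_. M)))"

end

theory Submission
  imports Defs
begin

text \<open>
  Both bounds rest on pointwise estimates of the square function
  \<open>sqrt (\<Sum>j\<le>k. \<phi>\<^sub>j\<^sup>2)\<close> by sums of increments
  \<open>sqrt (\<phi>\<^sub>j\<^sup>2 + c\<^sup>2) - c\<close>, whose expectations telescope.
  In (i), with \<open>c = \<lambda>\<^sub>j\<^sub>-\<^sub>1\<close>, the increments sum to \<open>\<lambda>\<^sub>n\<close> in expectation and the
  square function is at most their sum plus \<open>\<lambda>\<^sub>n\<close>.  In (ii) one takes the fixed shift
  \<open>c = S = max sup \<lambda>\<^sub>k\<close>; the increment \<open>sqrt (u\<^sup>2 + c\<^sup>2) - c\<close> decreases in \<open>c\<close>,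
  so the expected sum \<open>F\<close> of the increments is at most \<open>\<bbbE>\<lambda>\<^sub>n\<close>, while
  \<open>\<Sum> \<phi>\<^sub>j\<^sup>2 \<le> F\<^sup>2 + 2SF\<close>; Jensen's inequality for the square root finishes the proof.
  The estimates only involve the laws of the individual \<open>\<phi>\<^sub>k\<close>, which are the
  same on the product space \<open>\<Omega>\<^sup>n\<close>, so they apply to both norms.
\<close>

lemma sqrt_add_square_le_add:
  fixes a b s u :: real
  assumes "0 \<le> a" "0 \<le> b" "0 \<le> s" "sqrt s \<le> a + b"
  shows "sqrt (s + u\<^sup>2) \<le> sqrt (u\<^sup>2 + a\<^sup>2) + b"
proof -
  have "s \<le> (a + b)\<^sup>2"
    using assms by (metis real_sqrt_pow2 real_sqrt_ge_zero power_mono)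
  then have "s + u\<^sup>2 \<le> u\<^sup>2 + a\<^sup>2 + 2 * b * a + b\<^sup>2"
    by (simp add: power2_eq_square algebra_simps)
  also have "\<dots> \<le> (sqrt (u\<^sup>2 + a\<^sup>2) + b)\<^sup>2"
  proof -
    have "2 * b * a \<le> 2 * b * sqrt (u\<^sup>2 + a\<^sup>2)"
      using assms by (intro mult_left_mono) (simp_all add: real_le_rsqrt)
    then show ?thesis by (simp add: power2_eq_square algebra_simps)
  qed
  finally show ?thesis
    using assms by (simp add: real_le_lsqrt)
qed

lemma sqrt_add_square_diff_antimono:
  fixes u c d :: real
  assumes "0 \<le> c" "c \<le> d"
  shows "sqrt (u\<^sup>2 + d\<^sup>2) - d \<le> sqrt (u\<^sup>2 + c\<^sup>2) - c"
  using sqrt_add_square_le_add[of c "d - c" "d\<^sup>2" u] assms by (simp add: add.commute)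

lemma sum_diff_pred_telescope:
  fixes l :: "nat \<Rightarrow> 'a :: ab_group_add"
  shows "(\<Sum>j=1..n. l j - l (j - 1)) = l n - l 0"
  by (induction n) simp_all

lemma sqrt_sum_squares_le_increments:
  fixes a l :: "nat \<Rightarrow> real"
  assumes l0: "l 0 = 0" and mono: "\<And>k. k < n \<Longrightarrow> l k \<le> l (Suc k)"
  shows "sqrt (\<Sum>j=1..n. (a j)\<^sup>2) \<le> (\<Sum>j=1..n. sqrt ((a j)\<^sup>2 + (l (j - 1))\<^sup>2) - l (j - 1)) + l n"
proof -
  have nonneg: "0 \<le> l k" if "k \<le> n" for k
    using that by (induction k) (auto simp: l0 intro: order_trans[OF _ mono])
  have "sqrt (\<Sum>j=1..k. (a j)\<^sup>2) \<le> (\<Sum>j=1..k. sqrt ((a j)\<^sup>2 + (l (j - 1))\<^sup>2) - l (j - 1)) + l k"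
    if "k \<le> n" for k
    using that
  proof (induction k)
    case 0
    then show ?case by (simp add: l0)
  next
    case (Suc k)
    let ?T = "\<Sum>j=1..k. sqrt ((a j)\<^sup>2 + (l (j - 1))\<^sup>2) - l (j - 1)"
    have "0 \<le> ?T"
      by (intro sum_nonneg) (simp add: real_le_rsqrt)
    have "sqrt (\<Sum>j=1..Suc k. (a j)\<^sup>2) = sqrt ((\<Sum>j=1..k. (a j)\<^sup>2) + (a (Suc k))\<^sup>2)"
      by simp
    also have "\<dots> \<le> sqrt ((a (Suc k))\<^sup>2 + (l k)\<^sup>2) + ?T"
      using Suc \<open>0 \<le> ?T\<close> nonneg[of k]
      by (intro sqrt_add_square_le_add) (auto intro: sum_nonneg)
    also have "\<dots> = (\<Sum>j=1..Suc k. sqrt ((a j)\<^sup>2 + (l (j - 1))\<^sup>2) - l (j - 1)) + l k"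
      by simp
    also have "\<dots> \<le> (\<Sum>j=1..Suc k. sqrt ((a j)\<^sup>2 + (l (j - 1))\<^sup>2) - l (j - 1)) + l (Suc k)"
      using mono[of k] Suc.prems by simp
    finally show ?case .
  qed
  then show ?thesis by simp
qed

lemma sum_squares_le_shifted_increments:
  fixes a :: "'i \<Rightarrow> real" and S :: real
  assumes "finite A" "0 \<le> S"
  shows "(\<Sum>j\<in>A. (a j)\<^sup>2)
    \<le> (\<Sum>j\<in>A. sqrt ((a j)\<^sup>2 + S\<^sup>2) - S)\<^sup>2 + 2 * S * (\<Sum>j\<in>A. sqrt ((a j)\<^sup>2 + S\<^sup>2) - S)"
  using assms(1)
proof (induction A rule: finite_induct)
  case (insert i A)
  define F where "F = (\<Sum>j\<in>A. sqrt ((a j)\<^sup>2 + S\<^sup>2) - S)"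
  define d where "d = sqrt ((a i)\<^sup>2 + S\<^sup>2) - S"
  have "0 \<le> F" "0 \<le> d"
    unfolding F_def d_def using \<open>0 \<le> S\<close> by (auto intro!: sum_nonneg simp: real_le_rsqrt)
  have "(d + S)\<^sup>2 = (a i)\<^sup>2 + S\<^sup>2"
    unfolding d_def by simp
  then have "(a i)\<^sup>2 = d\<^sup>2 + 2 * S * d"
    by (simp add: power2_eq_square algebra_simps)
  moreover have "(F + d)\<^sup>2 + 2 * S * (F + d) = F\<^sup>2 + 2 * S * F + (d\<^sup>2 + 2 * S * d) + 2 * F * d"
    by (simp add: power2_eq_square algebra_simps)
  moreover have "0 \<le> 2 * F * d"
    using \<open>0 \<le> F\<close> \<open>0 \<le> d\<close> by simp
  moreover have "(\<Sum>j\<in>A. (a j)\<^sup>2) \<le> F\<^sup>2 + 2 * S * F"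
    using insert.IH by (simp add: F_def)
  moreover have "(\<Sum>j\<in>insert i A. sqrt ((a j)\<^sup>2 + S\<^sup>2) - S) = F + d"
    using insert.hyps by (simp add: F_def d_def)
  ultimately show ?case
    using insert.hyps by simp
qed simp

lemma sqrt_sum_squares_le_shifted_increments:
  fixes a :: "'i \<Rightarrow> real" and S :: real
  assumes "finite A" "0 \<le> S"
  defines "F \<equiv> \<Sum>j\<in>A. sqrt ((a j)\<^sup>2 + S\<^sup>2) - S"
  shows "sqrt (\<Sum>j\<in>A. (a j)\<^sup>2) \<le> F + sqrt (2 * S * F)"
proof (rule real_le_lsqrt)
  have "0 \<le> F"
    unfolding F_def using \<open>0 \<le> S\<close> by (auto intro!: sum_nonneg simp: real_le_rsqrt)
  then show "0 \<le> F + sqrt (2 * S * F)"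
    using \<open>0 \<le> S\<close> by simp
  have "F\<^sup>2 + 2 * S * F \<le> (F + sqrt (2 * S * F))\<^sup>2"
    using \<open>0 \<le> F\<close> \<open>0 \<le> S\<close> by (simp add: power2_eq_square algebra_simps)
  then show "(\<Sum>j\<in>A. (a j)\<^sup>2) \<le> (F + sqrt (2 * S * F))\<^sup>2"
    using sum_squares_le_shifted_increments[OF assms(1,2), of a] unfolding F_def by linarith
qed

lemma integrable_sqrt_sum_squares:
  fixes g :: "'i \<Rightarrow> 'a \<Rightarrow> real"
  assumes "finite I" "\<And>k. k \<in> I \<Longrightarrow> integrable M (g k)"
  shows "integrable M (\<lambda>\<omega>. sqrt (\<Sum>k\<in>I. (g k \<omega>)\<^sup>2))"
proof (rule Bochner_Integration.integrable_bound)
  show "integrable M (\<lambda>\<omega>. \<Sum>k\<in>I. \<bar>g k \<omega>\<bar>)"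
    using assms by auto
  have "\<And>k. k \<in> I \<Longrightarrow> g k \<in> borel_measurable M"
    using assms by auto
  then show "(\<lambda>\<omega>. sqrt (\<Sum>k\<in>I. (g k \<omega>)\<^sup>2)) \<in> borel_measurable M"
    by measurable
  show "AE \<omega> in M. norm (sqrt (\<Sum>k\<in>I. (g k \<omega>)\<^sup>2)) \<le> norm (\<Sum>k\<in>I. \<bar>g k \<omega>\<bar>)"
    using L2_set_le_sum_abs[of "\<lambda>k. g k _" I] by (auto simp: L2_set_def sum_nonneg)
qed

lemma integrable_sqrt_add_squares:
  fixes f h :: "'a \<Rightarrow> real"
  assumes "integrable M f" "integrable M h"
  shows "integrable M (\<lambda>\<omega>. sqrt ((f \<omega>)\<^sup>2 + (h \<omega>)\<^sup>2))"
proof (rule Bochner_Integration.integrable_bound)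
  show "integrable M (\<lambda>\<omega>. \<bar>f \<omega>\<bar> + \<bar>h \<omega>\<bar>)"
    using assms by auto
  show "(\<lambda>\<omega>. sqrt ((f \<omega>)\<^sup>2 + (h \<omega>)\<^sup>2)) \<in> borel_measurable M"
    using assms by measurable
  show "AE \<omega> in M. norm (sqrt ((f \<omega>)\<^sup>2 + (h \<omega>)\<^sup>2)) \<le> norm (\<bar>f \<omega>\<bar> + \<bar>h \<omega>\<bar>)"
    using sqrt_sum_squares_le_sum_abs by auto
qed

lemma (in finite_measure) integrable_sqrt:
  fixes X :: "'a \<Rightarrow> real"
  assumes "integrable M X"
  shows "integrable M (\<lambda>\<omega>. sqrt (X \<omega>))"
proof (rule Bochner_Integration.integrable_bound)
  show "integrable M (\<lambda>\<omega>. 1 + \<bar>X \<omega>\<bar>)"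
    using assms by auto
  show "(\<lambda>\<omega>. sqrt (X \<omega>)) \<in> borel_measurable M"
    using assms by measurable
  have "sqrt \<bar>x\<bar> \<le> 1 + \<bar>x\<bar>" for x :: real
    by (rule real_le_lsqrt) (auto simp: power2_eq_square algebra_simps)
  then show "AE \<omega> in M. norm (sqrt (X \<omega>)) \<le> norm (1 + \<bar>X \<omega>\<bar>)"
    by (auto simp: real_sqrt_abs'[symmetric])
qed

lemma (in prob_space) integral_sqrt_le_sqrt_integral:
  fixes X :: "'a \<Rightarrow> real"
  assumes X: "integrable M X" and nonneg: "AE \<omega> in M. 0 \<le> X \<omega>"
  shows "(\<integral>\<omega>. sqrt (X \<omega>) \<partial>M) \<le> sqrt (\<integral>\<omega>. X \<omega> \<partial>M)"
proof -
  have sqrt_X: "integrable M (\<lambda>\<omega>. sqrt (X \<omega>))"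
    using X by (rule integrable_sqrt)
  have "(\<integral>\<omega>. (sqrt (X \<omega>))\<^sup>2 \<partial>M) = (\<integral>\<omega>. X \<omega> \<partial>M)"
    using X nonneg by (intro integral_cong_AE) auto
  moreover have "integrable M (\<lambda>\<omega>. (sqrt (X \<omega>))\<^sup>2)"
    using X nonneg by (subst integrable_cong_AE[where g = X]) auto
  ultimately have "(\<integral>\<omega>. sqrt (X \<omega>) \<partial>M)\<^sup>2 \<le> (\<integral>\<omega>. X \<omega> \<partial>M)"
    using variance_positive[of "\<lambda>\<omega>. sqrt (X \<omega>)"] variance_eq[OF sqrt_X] by simp
  then show ?thesis
    using real_le_rsqrt by blast
qed

lemma (in prob_space) integral_sqrt_sum_squares_le_twice:
  fixes g :: "nat \<Rightarrow> 'a \<Rightarrow> real" and l :: "nat \<Rightarrow> real"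
  assumes int: "\<And>k. k \<in> {1..n} \<Longrightarrow> integrable M (g k)"
    and l0: "l 0 = 0"
    and rec: "\<And>k. k \<in> {1..n} \<Longrightarrow> l k = (\<integral>\<omega>. sqrt ((g k \<omega>)\<^sup>2 + (l (k - 1))\<^sup>2) \<partial>M)"
  shows "(\<integral>\<omega>. sqrt (\<Sum>k=1..n. (g k \<omega>)\<^sup>2) \<partial>M) \<le> 2 * l n"
proof -
  have int_incr: "integrable M (\<lambda>\<omega>. sqrt ((g k \<omega>)\<^sup>2 + c\<^sup>2))" if "k \<in> {1..n}" for k c
    using int[OF that] by (intro integrable_sqrt_add_squares) auto
  have mono: "l k \<le> l (Suc k)" if "k < n" for k
  proof -
    have "l k = (\<integral>\<omega>. l k \<partial>M)"
      by (simp add: prob_space)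
    also have "\<dots> \<le> (\<integral>\<omega>. sqrt ((g (Suc k) \<omega>)\<^sup>2 + (l k)\<^sup>2) \<partial>M)"
      using that int_incr[of "Suc k"] real_sqrt_ge_abs2 by (intro integral_mono) (auto intro: order_trans)
    finally show ?thesis
      using rec[of "Suc k"] that by simp
  qed
  have "(\<integral>\<omega>. sqrt (\<Sum>k=1..n. (g k \<omega>)\<^sup>2) \<partial>M)
      \<le> (\<integral>\<omega>. (\<Sum>j=1..n. sqrt ((g j \<omega>)\<^sup>2 + (l (j - 1))\<^sup>2) - l (j - 1)) + l n \<partial>M)"
  proof (rule integral_mono)
    show "integrable M (\<lambda>\<omega>. sqrt (\<Sum>k=1..n. (g k \<omega>)\<^sup>2))"
      using int by (intro integrable_sqrt_sum_squares) auto
    show "integrable M (\<lambda>\<omega>. (\<Sum>j=1..n. sqrt ((g j \<omega>)\<^sup>2 + (l (j - 1))\<^sup>2) - l (j - 1)) + l n)"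
      using int_incr by (intro Bochner_Integration.integrable_add integrable_sum integrable_diff) auto
  qed (rule sqrt_sum_squares_le_increments[OF l0 mono])
  also have "\<dots> = (\<Sum>j=1..n. (\<integral>\<omega>. sqrt ((g j \<omega>)\<^sup>2 + (l (j - 1))\<^sup>2) \<partial>M) - l (j - 1)) + l n"
    using int_incr
    by (subst Bochner_Integration.integral_add)
      (auto intro!: integrable_sum integrable_diff
        simp: Bochner_Integration.integral_sum Bochner_Integration.integral_diff prob_space)
  also have "\<dots> = (\<Sum>j=1..n. l j - l (j - 1)) + l n"
    using rec by simp
  also have "\<dots> = 2 * l n"
    using sum_diff_pred_telescope[of l n] l0 by simp
  finally show ?thesis .
qed

lemma add_sqrt_two_mult_le:
  fixes m S :: real
  assumes "0 \<le> m" "m \<le> S"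
  shows "m + sqrt (2 * S * m) \<le> (1 + sqrt 2) * sqrt m * sqrt S"
proof -
  have "m = sqrt m * sqrt m"
    using assms by simp
  also have "\<dots> \<le> sqrt m * sqrt S"
    using assms by (intro mult_left_mono) auto
  finally show ?thesis
    by (simp add: real_sqrt_mult algebra_simps)
qed

lemma (in prob_space) integral_sqrt_sum_squares_le_shifted:
  fixes g :: "nat \<Rightarrow> 'a \<Rightarrow> real" and S m :: real
  assumes int: "\<And>k. k \<in> {1..n} \<Longrightarrow> integrable M (g k)" and "0 \<le> S"
    and incr: "(\<Sum>k=1..n. \<integral>\<omega>. sqrt ((g k \<omega>)\<^sup>2 + S\<^sup>2) - S \<partial>M) \<le> m"
  shows "(\<integral>\<omega>. sqrt (\<Sum>k=1..n. (g k \<omega>)\<^sup>2) \<partial>M) \<le> m + sqrt (2 * S * m)"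
proof -
  define F where "F \<omega> = (\<Sum>k=1..n. sqrt ((g k \<omega>)\<^sup>2 + S\<^sup>2) - S)" for \<omega>
  have int_incr: "integrable M (\<lambda>\<omega>. sqrt ((g k \<omega>)\<^sup>2 + S\<^sup>2) - S)" if "k \<in> {1..n}" for k
    using int[OF that] by (intro Bochner_Integration.integrable_diff integrable_sqrt_add_squares) auto
  then have int_F: "integrable M F"
    unfolding F_def by auto
  have F_nonneg: "0 \<le> F \<omega>" for \<omega>
    unfolding F_def using \<open>0 \<le> S\<close> by (intro sum_nonneg) (simp add: real_le_rsqrt)
  have int_sqrt_F: "integrable M (\<lambda>\<omega>. sqrt (2 * S * F \<omega>))"
    using int_F by (intro integrable_sqrt) auto
  have "(\<integral>\<omega>. sqrt (\<Sum>k=1..n. (g k \<omega>)\<^sup>2) \<partial>M) \<le> (\<integral>\<omega>. F \<omega> + sqrt (2 * S * F \<omega>) \<partial>M)"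
  proof (rule integral_mono)
    show "integrable M (\<lambda>\<omega>. sqrt (\<Sum>k=1..n. (g k \<omega>)\<^sup>2))"
      using int by (intro integrable_sqrt_sum_squares) auto
    show "sqrt (\<Sum>k=1..n. (g k \<omega>)\<^sup>2) \<le> F \<omega> + sqrt (2 * S * F \<omega>)" for \<omega>
      unfolding F_def using \<open>0 \<le> S\<close> by (intro sqrt_sum_squares_le_shifted_increments) auto
  qed (use int_F int_sqrt_F in auto)
  also have "\<dots> = (\<integral>\<omega>. F \<omega> \<partial>M) + (\<integral>\<omega>. sqrt (2 * S * F \<omega>) \<partial>M)"
    using int_F int_sqrt_F by (rule Bochner_Integration.integral_add)
  also have "\<dots> \<le> (\<integral>\<omega>. F \<omega> \<partial>M) + sqrt (\<integral>\<omega>. 2 * S * F \<omega> \<partial>M)"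
    using int_F F_nonneg \<open>0 \<le> S\<close> by (intro add_left_mono integral_sqrt_le_sqrt_integral) auto
  also have "\<dots> \<le> m + sqrt (2 * S * m)"
  proof -
    have "(\<integral>\<omega>. F \<omega> \<partial>M) \<le> m"
      using int_incr incr unfolding F_def by (subst Bochner_Integration.integral_sum) auto
    then show ?thesis
      using \<open>0 \<le> S\<close> by (auto intro!: add_mono real_sqrt_le_mono mult_left_mono)
  qed
  finally show ?thesis .
qed

lemma (in prob_space) sum_shifted_increments_le:
  fixes \<phi> L :: "nat \<Rightarrow> 'a \<Rightarrow> real" and S :: real
  assumes int: "\<And>k. k \<in> {1..n} \<Longrightarrow> integrable M (\<phi> k)"
    and int_L: "\<And>k. k \<le> n \<Longrightarrow> integrable M (L k)"
    and L0: "L 0 = (\<lambda>_. 0)"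
    and bounds: "\<And>k \<omega>. k \<le> n \<Longrightarrow> \<omega> \<in> space M \<Longrightarrow> 0 \<le> L k \<omega> \<and> L k \<omega> \<le> S"
    and rec: "\<And>k. k \<in> {1..n} \<Longrightarrow>
      (\<integral>\<omega>. sqrt ((\<phi> k \<omega>)\<^sup>2 + (L (k - 1) \<omega>)\<^sup>2) \<partial>M) \<le> (\<integral>\<omega>. L k \<omega> \<partial>M)"
  shows "(\<Sum>k=1..n. \<integral>\<omega>. sqrt ((\<phi> k \<omega>)\<^sup>2 + S\<^sup>2) - S \<partial>M) \<le> (\<integral>\<omega>. L n \<omega> \<partial>M)"
proof -
  have "(\<integral>\<omega>. sqrt ((\<phi> k \<omega>)\<^sup>2 + S\<^sup>2) - S \<partial>M) \<le> (\<integral>\<omega>. L k \<omega> \<partial>M) - (\<integral>\<omega>. L (k - 1) \<omega> \<partial>M)"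
    if k: "k \<in> {1..n}" for k
  proof -
    have int_prev: "integrable M (L (k - 1))"
      using k by (intro int_L) auto
    have int_incr: "integrable M (\<lambda>\<omega>. sqrt ((\<phi> k \<omega>)\<^sup>2 + (L (k - 1) \<omega>)\<^sup>2))"
      using int[OF k] int_prev by (rule integrable_sqrt_add_squares)
    have "(\<integral>\<omega>. sqrt ((\<phi> k \<omega>)\<^sup>2 + S\<^sup>2) - S \<partial>M)
        \<le> (\<integral>\<omega>. sqrt ((\<phi> k \<omega>)\<^sup>2 + (L (k - 1) \<omega>)\<^sup>2) - L (k - 1) \<omega> \<partial>M)"
    proof (rule integral_mono)
      show "integrable M (\<lambda>\<omega>. sqrt ((\<phi> k \<omega>)\<^sup>2 + S\<^sup>2) - S)"
        using int[OF k] by (intro Bochner_Integration.integrable_diff integrable_sqrt_add_squares) auto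
    qed (use int_incr int_prev bounds k in \<open>auto intro!: sqrt_add_square_diff_antimono\<close>)
    also have "\<dots> = (\<integral>\<omega>. sqrt ((\<phi> k \<omega>)\<^sup>2 + (L (k - 1) \<omega>)\<^sup>2) \<partial>M) - (\<integral>\<omega>. L (k - 1) \<omega> \<partial>M)"
      using int_incr int_prev by (rule Bochner_Integration.integral_diff)
    also have "\<dots> \<le> (\<integral>\<omega>. L k \<omega> \<partial>M) - (\<integral>\<omega>. L (k - 1) \<omega> \<partial>M)"
      using rec[OF k] by simp
    finally show ?thesis .
  qed
  then have "(\<Sum>k=1..n. \<integral>\<omega>. sqrt ((\<phi> k \<omega>)\<^sup>2 + S\<^sup>2) - S \<partial>M)
      \<le> (\<Sum>k=1..n. (\<integral>\<omega>. L k \<omega> \<partial>M) - (\<integral>\<omega>. L (k - 1) \<omega> \<partial>M))"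
    by (intro sum_mono) auto
  also have "\<dots> = (\<integral>\<omega>. L n \<omega> \<partial>M)"
    using sum_diff_pred_telescope[of "\<lambda>k. \<integral>\<omega>. L k \<omega> \<partial>M" n] by (simp add: L0)
  finally show ?thesis .
qed

lemma
  fixes h :: "'a \<Rightarrow> real"
  assumes M: "prob_space M" and k: "k \<in> I" and h: "h \<in> borel_measurable M"
  shows integral_PiM_component: "(\<integral>\<omega>. h (\<omega> k) \<partial>PiM I (\<lambda>_. M)) = (\<integral>x. h x \<partial>M)"
    and integrable_PiM_component:
      "integrable M h \<Longrightarrow> integrable (PiM I (\<lambda>_. M)) (\<lambda>\<omega>. h (\<omega> k))"
proof -
  have distr: "distr (PiM I (\<lambda>_. M)) M (\<lambda>\<omega>. \<omega> k) = M"
    using M k by (intro distr_PiM_component)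
  have component: "(\<lambda>\<omega>. \<omega> k) \<in> measurable (PiM I (\<lambda>_. M)) M"
    using k by (rule measurable_component_singleton)
  show "(\<integral>\<omega>. h (\<omega> k) \<partial>PiM I (\<lambda>_. M)) = (\<integral>x. h x \<partial>M)"
    using integral_distr[OF component h] distr by simp
  show "integrable M h \<Longrightarrow> integrable (PiM I (\<lambda>_. M)) (\<lambda>\<omega>. h (\<omega> k))"
    using integrable_distr_eq[OF component h] distr by simp
qed

lemma le_Max_SUP:
  fixes f :: "'i \<Rightarrow> 'a \<Rightarrow> real"
  assumes "finite I" "k \<in> I" "x \<in> A" "bdd_above (f k ` A)"
  shows "f k x \<le> Max ((\<lambda>k. SUP x\<in>A. f k x) ` I)"
proof -
  have "f k x \<le> (SUP x\<in>A. f k x)"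
    using assms(3,4) by (rule cSUP_upper)
  also have "\<dots> \<le> Max ((\<lambda>k. SUP x\<in>A. f k x) ` I)"
    using assms(1,2) by (intro Max_ge) auto
  finally show ?thesis .
qed

lemma max_norms_le_twice_recursion:
  fixes \<phi> :: "nat \<Rightarrow> 'a \<Rightarrow> real" and l :: "nat \<Rightarrow> real"
  assumes M: "prob_space M" and int: "\<And>k. k \<in> {1..n} \<Longrightarrow> integrable M (\<phi> k)"
    and l0: "l 0 = 0"
    and rec: "\<And>k. k \<in> {1..n} \<Longrightarrow> l k = (\<integral>\<omega>. sqrt ((\<phi> k \<omega>)\<^sup>2 + (l (k - 1))\<^sup>2) \<partial>M)"
  shows "max (L1l2_norm M n \<phi>) (ind_norm M n \<phi>) \<le> 2 * l n"
proof -
  interpret \<Omega>n: prob_space "PiM {1..n} (\<lambda>_. M)"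
    using M by (intro prob_space_PiM)
  have "L1l2_norm M n \<phi> \<le> 2 * l n"
    unfolding L1l2_norm_def using M int l0 rec by (rule prob_space.integral_sqrt_sum_squares_le_twice)
  moreover have "ind_norm M n \<phi> \<le> 2 * l n"
    unfolding ind_norm_def
  proof (rule \<Omega>n.integral_sqrt_sum_squares_le_twice)
    show "l 0 = 0"
      by (rule l0)
    fix k assume k: "k \<in> {1..n}"
    then show "integrable (PiM {1..n} (\<lambda>_. M)) (\<lambda>\<omega>. \<phi> k (\<omega> k))"
      using int[OF k] by (intro integrable_PiM_component[OF M]) auto
    have "(\<integral>\<omega>. sqrt ((\<phi> k (\<omega> k))\<^sup>2 + (l (k - 1))\<^sup>2) \<partial>PiM {1..n} (\<lambda>_. M))
        = (\<integral>\<omega>. sqrt ((\<phi> k \<omega>)\<^sup>2 + (l (k - 1))\<^sup>2) \<partial>M)"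
      by (rule integral_PiM_component[OF M k]) (use int[OF k] in measurable)
    with rec[OF k] show "l k = (\<integral>\<omega>. sqrt ((\<phi> k (\<omega> k))\<^sup>2 + (l (k - 1))\<^sup>2) \<partial>PiM {1..n} (\<lambda>_. M))"
      by simp
  qed
  ultimately show ?thesis
    by simp
qed

lemma max_norms_le_sqrt_mean_sup:
  fixes \<phi> L :: "nat \<Rightarrow> 'a \<Rightarrow> real"
  assumes M: "prob_space M" and "n \<ge> 1"
    and int: "\<And>k. k \<in> {1..n} \<Longrightarrow> integrable M (\<phi> k)"
    and L0: "L 0 = (\<lambda>_. 0)"
    and int_L: "\<And>k. k \<in> {1..n} \<Longrightarrow> integrable M (L k)"
    and nonneg: "\<And>k \<omega>. k \<in> {1..n} \<Longrightarrow> \<omega> \<in> space M \<Longrightarrow> 0 \<le> L k \<omega>"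
    and bounded: "\<And>k \<omega>. k \<in> {1..n} \<Longrightarrow> \<omega> \<in> space M \<Longrightarrow> L k \<omega> \<le> B"
    and rec: "\<And>k. k \<in> {1..n} \<Longrightarrow>
      (\<integral>\<omega>. sqrt ((\<phi> k \<omega>)\<^sup>2 + (L (k - 1) \<omega>)\<^sup>2) \<partial>M) \<le> (\<integral>\<omega>. L k \<omega> \<partial>M)"
  defines "S \<equiv> Max ((\<lambda>k. SUP \<omega>\<in>space M. L k \<omega>) ` {1..n})"
  shows "max (L1l2_norm M n \<phi>) (ind_norm M n \<phi>) \<le> (1 + sqrt 2) * sqrt (\<integral>\<omega>. L n \<omega> \<partial>M) * sqrt S"
proof -
  interpret prob_space M
    by (rule M)
  interpret \<Omega>n: prob_space "PiM {1..n} (\<lambda>_. M)"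
    using M by (intro prob_space_PiM)
  have L_le_S: "L k \<omega> \<le> S" if "k \<in> {1..n}" "\<omega> \<in> space M" for k \<omega>
    unfolding S_def using that bounded by (intro le_Max_SUP bdd_aboveI2) auto
  obtain \<omega>\<^sub>0 where "\<omega>\<^sub>0 \<in> space M"
    using not_empty by blast
  then have "0 \<le> S"
    using nonneg L_le_S \<open>n \<ge> 1\<close> by (meson atLeastAtMost_iff order_trans order_refl)
  then have bounds: "0 \<le> L k \<omega> \<and> L k \<omega> \<le> S" if "k \<le> n" "\<omega> \<in> space M" for k \<omega>
    using that nonneg L_le_S L0 by (cases "k = 0") auto
  define m where "m = (\<integral>\<omega>. L n \<omega> \<partial>M)"
  have int_L': "integrable M (L k)" if "k \<le> n" for k
    using that int_L L0 by (cases "k = 0") auto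
  have "0 \<le> m" "m \<le> S"
    unfolding m_def using int_L' bounds integral_mono[of M "L n" "\<lambda>_. S"]
    by (auto intro!: integral_nonneg_AE simp: prob_space)
  have incr: "(\<Sum>k=1..n. \<integral>\<omega>. sqrt ((\<phi> k \<omega>)\<^sup>2 + S\<^sup>2) - S \<partial>M) \<le> m"
    unfolding m_def using int int_L' L0 bounds rec by (rule sum_shifted_increments_le)
  have "L1l2_norm M n \<phi> \<le> m + sqrt (2 * S * m)"
    unfolding L1l2_norm_def using int \<open>0 \<le> S\<close> incr by (rule integral_sqrt_sum_squares_le_shifted)
  moreover have "ind_norm M n \<phi> \<le> m + sqrt (2 * S * m)"
    unfolding ind_norm_def
  proof (rule \<Omega>n.integral_sqrt_sum_squares_le_shifted[OF _ \<open>0 \<le> S\<close>])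
    show "integrable (PiM {1..n} (\<lambda>_. M)) (\<lambda>\<omega>. \<phi> k (\<omega> k))" if "k \<in> {1..n}" for k
      using int[OF that] that by (intro integrable_PiM_component[OF M]) auto
    have "(\<integral>\<omega>. sqrt ((\<phi> k (\<omega> k))\<^sup>2 + S\<^sup>2) - S \<partial>PiM {1..n} (\<lambda>_. M))
        = (\<integral>\<omega>. sqrt ((\<phi> k \<omega>)\<^sup>2 + S\<^sup>2) - S \<partial>M)" if "k \<in> {1..n}" for k
      by (rule integral_PiM_component[OF M that]) (use int[OF that] in measurable)
    then show "(\<Sum>k=1..n. \<integral>\<omega>. sqrt ((\<phi> k (\<omega> k))\<^sup>2 + S\<^sup>2) - S \<partial>PiM {1..n} (\<lambda>_. M)) \<le> m"
      using incr by simp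
  qed
  ultimately show ?thesis
    using add_sqrt_two_mult_le[OF \<open>0 \<le> m\<close> \<open>m \<le> S\<close>] unfolding m_def by simp
qed

theorem lemma1p5:
  fixes M :: "'a measure" and n :: nat and \<phi> :: "nat \<Rightarrow> 'a \<Rightarrow> real"
  assumes "prob_space M"
    and "n \<ge> 1"
    and "\<And>k. k \<in> {1..n} \<Longrightarrow> \<phi> k \<in> borel_measurable M"
    and "\<And>k. k \<in> {1..n} \<Longrightarrow> integrable M (\<phi> k)"
    and "\<And>k \<omega>. k \<in> {1..n} \<Longrightarrow> \<omega> \<in> space M \<Longrightarrow> \<phi> k \<omega> \<ge> 0"
  shows
    "(\<forall>l :: nat \<Rightarrow> real.
        l 0 = 0 \<and>
        (\<forall>k\<in>{1..n}. l k = (\<integral>\<omega>. sqrt ((\<phi> k \<omega>)^2 + (l (k - 1))^2) \<partial>M))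
        \<longrightarrow> max (L1l2_norm M n \<phi>) (ind_norm M n \<phi>) \<le> 2 * l n)
     \<and>
     (\<forall>L :: nat \<Rightarrow> 'a \<Rightarrow> real.
        L 0 = (\<lambda>_. 0) \<and>
        (\<forall>k\<in>{1..n}. L k \<in> borel_measurable M \<and> integrable M (L k)) \<and>
        (\<forall>k\<in>{1..n}. \<forall>\<omega>\<in>space M. L k \<omega> \<ge> 0) \<and>
        (\<exists>B. \<forall>k\<in>{1..n}. \<forall>\<omega>\<in>space M. L k \<omega> \<le> B) \<and>
        (\<forall>k\<in>{1..n}. (\<integral>\<omega>. L k \<omega> \<partial>M) \<ge>
                       (\<integral>\<omega>. sqrt ((\<phi> k \<omega>)^2 + (L (k - 1) \<omega>)^2) \<partial>M))
        \<longrightarrow> max (L1l2_norm M n \<phi>) (ind_norm M n \<phi>)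
              \<le> (1 + sqrt 2) * sqrt (\<integral>\<omega>. L n \<omega> \<partial>M)
                 * sqrt (Max ((\<lambda>k. SUP \<omega>\<in>space M. L k \<omega>) ` {1..n})))"
proof (intro conjI allI impI)
  fix l :: "nat \<Rightarrow> real"
  assume "l 0 = 0 \<and> (\<forall>k\<in>{1..n}. l k = (\<integral>\<omega>. sqrt ((\<phi> k \<omega>)^2 + (l (k - 1))^2) \<partial>M))"
  then show "max (L1l2_norm M n \<phi>) (ind_norm M n \<phi>) \<le> 2 * l n"
    using assms(1,4) by (intro max_norms_le_twice_recursion) auto
next
  fix L :: "nat \<Rightarrow> 'a \<Rightarrow> real"
  assume hyps: "L 0 = (\<lambda>_. 0) \<and>
        (\<forall>k\<in>{1..n}. L k \<in> borel_measurable M \<and> integrable M (L k)) \<and>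
        (\<forall>k\<in>{1..n}. \<forall>\<omega>\<in>space M. L k \<omega> \<ge> 0) \<and>
        (\<exists>B. \<forall>k\<in>{1..n}. \<forall>\<omega>\<in>space M. L k \<omega> \<le> B) \<and>
        (\<forall>k\<in>{1..n}. (\<integral>\<omega>. L k \<omega> \<partial>M) \<ge>
                       (\<integral>\<omega>. sqrt ((\<phi> k \<omega>)^2 + (L (k - 1) \<omega>)^2) \<partial>M))"
  then obtain B where "\<forall>k\<in>{1..n}. \<forall>\<omega>\<in>space M. L k \<omega> \<le> B"
    by blast
  with hyps show "max (L1l2_norm M n \<phi>) (ind_norm M n \<phi>)
      \<le> (1 + sqrt 2) * sqrt (\<integral>\<omega>. L n \<omega> \<partial>M) * sqrt (Max ((\<lambda>k. SUP \<omega>\<in>space M. L k \<omega>) ` {1..n}))"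
    using assms(1,2,4) by (intro max_norms_le_sqrt_mean_sup[where B = B]) auto
qed

end
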